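(* Let $\vartheta_2,\vartheta_3,\vartheta_4,\eta$ be functions of $\tau$ (with $\vartheta_2\vartheta_3\vartheta_4\neq0$) satisfying $$\frac{d\vartheta_2}{d\tau}=\frac{i}{\pi}\Big\{\eta+\frac{\pi^2}{12}(\vartheta_3^4+\vartheta_4^4)\Big\}\vartheta_2,\quad \frac{d\vartheta_4}{d\tau}=\frac{i}{\pi}\Big\{\eta-\frac{\pi^2}{12}(\vartheta_2^4+\vartheta_3^4)\Big\}\vartheta_4,$$ $$\frac{d\vartheta_3}{d\tau}=\frac{i}{\pi}\Big\{\eta+\frac{\pi^2}{12}(\vartheta_2^4-\vartheta_4^4)\Big\}\vartheta_3,\quad \frac{d\eta}{d\tau}=\frac{i}{\pi}\Big\{2\eta^2-\frac{\pi^4}{12^2}(\vartheta_2^8+\vartheta_3^8+\vartheta_4^8)\Big\}.$$ Then the quantity $\mathfrak{A}^4$ defined by $(\mathfrak{A}^4-1)\vartheta_2^4\vartheta_3^4\vartheta_4^4=(\vartheta_3^4-\vartheta_2^4-\vartheta_4^4)^3$ is constant in $\tau$; i.e. this relation is an algebraic integral of the system. *)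

theory Defs
  imports "HOL-Analysis.Analysis"
begin

end

theory Submission
  imports Defs
begin

text \<open>Put \<open>X\<^sub>j = \<vartheta>\<^sub>j\<^sup>4\<close>. The system gives \<open>X\<^sub>j' = 4k(\<eta> + \<dots>)X\<^sub>j\<close> with \<open>k = i/\<pi>\<close>,
  and in both \<open>(X\<^sub>3 - X\<^sub>2 - X\<^sub>4)\<^sup>3\<close> and \<open>X\<^sub>2X\<^sub>3X\<^sub>4\<close> the \<open>\<pi>\<^sup>2/12\<close>-terms of the
  logarithmic derivatives cancel, leaving \<open>12k\<eta>\<close> for both. Two nonvanishing functions with the
  same logarithmic derivative on a connected open set are proportional, which gives the constant
  \<open>A4 - 1\<close>.\<close>

lemma proportional_if_same_logarithmic_derivative:
  fixes f g h :: "'a::{real_normed_field,euclidean_space} \<Rightarrow> 'a"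
  assumes "open S" "connected S"
    and g_nz: "\<And>x. x \<in> S \<Longrightarrow> g x \<noteq> 0"
    and f': "\<And>x. x \<in> S \<Longrightarrow> (f has_field_derivative h x * f x) (at x)"
    and g': "\<And>x. x \<in> S \<Longrightarrow> (g has_field_derivative h x * g x) (at x)"
  shows "\<exists>c. \<forall>x\<in>S. f x = c * g x"
proof -
  have "((\<lambda>x. f x / g x) has_field_derivative 0) (at x)" if "x \<in> S" for x
    using DERIV_divide[OF f'[OF that] g'[OF that] g_nz[OF that]] by (simp add: algebra_simps)
  then have "(\<lambda>x. f x / g x) constant_on S"
    using assms(1,2) by (intro has_field_derivative_0_imp_constant_on)
  then obtain c where "\<And>x. x \<in> S \<Longrightarrow> f x / g x = c"
    by (auto simp: constant_on_def)
  then show ?thesis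
    using g_nz by (auto simp: field_simps)
qed

lemma has_field_derivative_power_logarithmic:
  fixes f :: "'a::real_normed_field \<Rightarrow> 'a"
  assumes "(f has_field_derivative a * f x) (at x)"
  shows "((\<lambda>x. f x ^ n) has_field_derivative (of_nat n * a) * f x ^ n) (at x)"
  using DERIV_power[OF assms, of n]
  by (cases n) (simp_all add: algebra_simps)

lemma theta_invariants_logarithmic_derivatives:
  fixes A B C :: "'a::real_normed_field \<Rightarrow> 'a" and e k q :: 'a
  assumes A': "(A has_field_derivative 4 * (k * (e + q * (B x + C x))) * A x) (at x)"
    and B': "(B has_field_derivative 4 * (k * (e + q * (A x - C x))) * B x) (at x)"
    and C': "(C has_field_derivative 4 * (k * (e - q * (A x + B x))) * C x) (at x)"
  shows "((\<lambda>x. (B x - A x - C x) ^ 3) has_field_derivative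
            12 * k * e * (B x - A x - C x) ^ 3) (at x)"
    and "((\<lambda>x. A x * B x * C x) has_field_derivative
            12 * k * e * (A x * B x * C x)) (at x)"
proof -
  have "((\<lambda>x. B x - A x - C x) has_field_derivative
          4 * k * e * (B x - A x - C x)) (at x)"
    by (rule derivative_eq_intros A' B' C' refl)+ (simp add: algebra_simps)
  from has_field_derivative_power_logarithmic[OF this, of 3]
  show "((\<lambda>x. (B x - A x - C x) ^ 3) has_field_derivative
          12 * k * e * (B x - A x - C x) ^ 3) (at x)"
    by (simp add: algebra_simps)
  show "((\<lambda>x. A x * B x * C x) has_field_derivative
          12 * k * e * (A x * B x * C x)) (at x)"
    by (rule derivative_eq_intros A' B' C' refl)+ (simp add: algebra_simps)
qed

theorem proposition7p3:
  fixes t2 t3 t4 eta :: "complex \<Rightarrow> complex" and S :: "complex set"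
  assumes "open S" and "connected S"
    and nz: "\<And>\<tau>. \<tau> \<in> S \<Longrightarrow> t2 \<tau> * t3 \<tau> * t4 \<tau> \<noteq> 0"
    and d2: "\<And>\<tau>. \<tau> \<in> S \<Longrightarrow> (t2 has_field_derivative
        (\<i> / pi) * (eta \<tau> + pi^2 / 12 * (t3 \<tau> ^ 4 + t4 \<tau> ^ 4)) * t2 \<tau>) (at \<tau>)"
    and d4: "\<And>\<tau>. \<tau> \<in> S \<Longrightarrow> (t4 has_field_derivative
        (\<i> / pi) * (eta \<tau> - pi^2 / 12 * (t2 \<tau> ^ 4 + t3 \<tau> ^ 4)) * t4 \<tau>) (at \<tau>)"
    and d3: "\<And>\<tau>. \<tau> \<in> S \<Longrightarrow> (t3 has_field_derivative
        (\<i> / pi) * (eta \<tau> + pi^2 / 12 * (t2 \<tau> ^ 4 - t4 \<tau> ^ 4)) * t3 \<tau>) (at \<tau>)"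
    and de: "\<And>\<tau>. \<tau> \<in> S \<Longrightarrow> (eta has_field_derivative
        (\<i> / pi) * (2 * eta \<tau> ^ 2 - pi^4 / 12^2 * (t2 \<tau> ^ 8 + t3 \<tau> ^ 8 + t4 \<tau> ^ 8))) (at \<tau>)"
  shows "\<exists>A4::complex. \<forall>\<tau>\<in>S.
           (A4 - 1) * t2 \<tau> ^ 4 * t3 \<tau> ^ 4 * t4 \<tau> ^ 4 = (t3 \<tau> ^ 4 - t2 \<tau> ^ 4 - t4 \<tau> ^ 4) ^ 3"
proof -
  note fourth_power = has_field_derivative_power_logarithmic[where n = 4, unfolded of_nat_numeral]
  have invariants:
    "((\<lambda>\<tau>. (t3 \<tau> ^ 4 - t2 \<tau> ^ 4 - t4 \<tau> ^ 4) ^ 3) has_field_derivative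
        12 * (\<i> / pi) * eta \<tau> * (t3 \<tau> ^ 4 - t2 \<tau> ^ 4 - t4 \<tau> ^ 4) ^ 3) (at \<tau>)"
    "((\<lambda>\<tau>. t2 \<tau> ^ 4 * t3 \<tau> ^ 4 * t4 \<tau> ^ 4) has_field_derivative
        12 * (\<i> / pi) * eta \<tau> * (t2 \<tau> ^ 4 * t3 \<tau> ^ 4 * t4 \<tau> ^ 4)) (at \<tau>)"
    if "\<tau> \<in> S" for \<tau>
    using theta_invariants_logarithmic_derivatives
      [where A = "\<lambda>\<tau>. t2 \<tau> ^ 4" and B = "\<lambda>\<tau>. t3 \<tau> ^ 4" and C = "\<lambda>\<tau>. t4 \<tau> ^ 4" and x = \<tau>,
       OF fourth_power[OF d2[OF that]] fourth_power[OF d3[OF that]] fourth_power[OF d4[OF that]]] by auto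
  obtain c where c: "\<forall>\<tau>\<in>S. (t3 \<tau> ^ 4 - t2 \<tau> ^ 4 - t4 \<tau> ^ 4) ^ 3
                             = c * (t2 \<tau> ^ 4 * t3 \<tau> ^ 4 * t4 \<tau> ^ 4)"
    using proportional_if_same_logarithmic_derivative[OF assms(1,2) _ invariants] nz
    by (auto simp: mult.assoc)
  then show ?thesis
    by (intro exI[of _ "c + 1"]) (simp add: mult.assoc)
qed

end
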